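(* Let $\mathbf P\in\mathbb{R}^{n\times n}$ be symmetric positive definite and $\mathbf c\in\mathbb{R}^n$. Then $$\ell_{\mathbf c,\mathbf P}(\beta)<-1\quad\text{for all }\beta>\max\{\lambda_{\min}(\mathbf P)^{-1},\,1-\mathbf c^\top\mathbf c\}.$$
   Context: Let $\mathbf P=\mathbf V\mathbf D\mathbf V^\top$ be a spectral decomposition with $\mathbf V$ orthogonal and $\mathbf D$ diagonal with entries $\lambda_i=D_{ii}$; let $\bar{\mathbf c}=\mathbf V^\top\mathbf c$, $S(\bar{\mathbf c})=\{i:\bar c_i\ne0\}$, and $\lambda_{\min}(\mathbf P)$ the smallest eigenvalue of $\mathbf P$. For $\beta>\lambda_{\min}(\mathbf P)^{-1}$, $\ell_{\mathbf c,\mathbf P}(\beta)=-\beta-\sum_{i\in S(\bar{\mathbf c})}\bar c_i^2\frac{\lambda_i\beta}{\lambda_i\beta-1}$. *)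

theory Defs
  imports "HOL-Analysis.Analysis"
begin

definition is_diagonal :: "real^'n^'n \<Rightarrow> bool" where
  "is_diagonal D \<longleftrightarrow> (\<forall>i j. i \<noteq> j \<longrightarrow> D $ i $ j = 0)"

definition pos_def :: "real^'n^'n \<Rightarrow> bool" where
  "pos_def P \<longleftrightarrow> transpose P = P \<and> (\<forall>x. x \<noteq> 0 \<longrightarrow> x \<bullet> (P *v x) > 0)"

definition eigenvalues :: "real^'n^'n \<Rightarrow> real set" where
  "eigenvalues P = {l. \<exists>v. v \<noteq> 0 \<and> P *v v = l *\<^sub>R v}"

definition lambda_min :: "real^'n^'n \<Rightarrow> real" where
  "lambda_min P = Min (eigenvalues P)"

text \<open>ell for the spectral decomposition P = V D V^T, cbar = V^T c.\<close>
definition ell :: "real^'n^'n \<Rightarrow> real^'n^'n \<Rightarrow> real^'n \<Rightarrow> real \<Rightarrow> real" where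
  "ell V D c \<beta> = (let cb = transpose V *v c in
     - \<beta> - (\<Sum>i\<in>{i. cb $ i \<noteq> 0}. (cb $ i)^2 * (D $ i $ i * \<beta> / (D $ i $ i * \<beta> - 1))))"

end

theory Submission
  imports Defs
begin

text \<open>
  Conjugation by an orthogonal matrix preserves eigenvalues, so the diagonal entries
  \<open>\<lambda>\<^sub>i\<close> of \<open>D\<close> are exactly the eigenvalues of \<open>P\<close>, all of them at least
  \<open>lambda_min P > 0\<close>. Hence \<open>\<beta> > inverse (lambda_min P)\<close> forces \<open>\<lambda>\<^sub>i \<beta> > 1\<close>,
  so every weight \<open>\<lambda>\<^sub>i \<beta> / (\<lambda>\<^sub>i \<beta> - 1)\<close> is at least 1; and since \<open>V\<close> is
  orthogonal, the squared coordinates of \<open>V\<^sup>T c\<close> sum to \<open>c \<bullet> c\<close>.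
  Thus \<open>ell V D c \<beta> \<le> -\<beta> - c \<bullet> c < -1\<close>.
\<close>

lemma orthogonal_matrix_inner:
  fixes V :: "real^'n^'n"
  assumes "orthogonal_matrix V"
  shows "(V *v x) \<bullet> (V *v y) = x \<bullet> y"
  using assms orthogonal_transformation_matrix[of "(*v) V"]
  by (simp add: matrix_vector_mul_linear orthogonal_transformation_def)

lemma orthogonal_matrix_transpose_mulv_cancel:
  fixes V :: "real^'n^'n"
  assumes "orthogonal_matrix V"
  shows "transpose V *v (V *v x) = x"
  using assms by (simp add: orthogonal_matrix_def matrix_vector_mul_assoc)

lemma eigenvalues_orthogonal_conj_subset:
  fixes A V :: "real^'n^'n"
  assumes "orthogonal_matrix V"
  shows "eigenvalues A \<subseteq> eigenvalues (V ** A ** transpose V)"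
proof
  fix l assume "l \<in> eigenvalues A"
  then obtain v where v: "v \<noteq> 0" "A *v v = l *\<^sub>R v"
    by (auto simp: eigenvalues_def)
  have "V *v v \<noteq> 0"
    using v(1) orthogonal_matrix_transpose_mulv_cancel[OF assms, of v] by auto
  moreover have "(V ** A ** transpose V) *v (V *v v) = V *v (A *v (transpose V *v (V *v v)))"
    by (simp only: matrix_vector_mul_assoc matrix_mul_assoc)
  then have "(V ** A ** transpose V) *v (V *v v) = l *\<^sub>R (V *v v)"
    using v(2) by (simp only: orthogonal_matrix_transpose_mulv_cancel[OF assms]
        matrix_vector_mult_scaleR)
  ultimately show "l \<in> eigenvalues (V ** A ** transpose V)"
    unfolding eigenvalues_def by blast
qed

lemma eigenvalues_orthogonal_conj:
  fixes A V :: "real^'n^'n"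
  assumes "orthogonal_matrix V"
  shows "eigenvalues (V ** A ** transpose V) = eigenvalues A"
proof
  have "transpose V ** (V ** A ** transpose V) ** transpose (transpose V)
      = (transpose V ** V) ** A ** (transpose V ** V)"
    by (simp only: transpose_transpose matrix_mul_assoc)
  also have "\<dots> = A"
    using assms by (simp add: orthogonal_matrix)
  finally have conj_back: "transpose V ** (V ** A ** transpose V) ** transpose (transpose V) = A" .
  have "eigenvalues (V ** A ** transpose V)
      \<subseteq> eigenvalues (transpose V ** (V ** A ** transpose V) ** transpose (transpose V))"
    by (rule eigenvalues_orthogonal_conj_subset) (simp add: assms)
  then show "eigenvalues (V ** A ** transpose V) \<subseteq> eigenvalues A"
    unfolding conj_back .
qed (rule eigenvalues_orthogonal_conj_subset[OF assms])

lemma is_diagonal_mulv_nth: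
  fixes D :: "real^'n^'n"
  assumes "is_diagonal D"
  shows "(D *v x) $ i = D $ i $ i * x $ i"
proof -
  have "(D *v x) $ i = (\<Sum>j\<in>UNIV. D $ i $ j * x $ j)"
    by (simp add: matrix_vector_mult_def)
  also have "\<dots> = D $ i $ i * x $ i"
    using assms by (subst sum.remove[of _ i]) (auto simp: is_diagonal_def)
  finally show ?thesis .
qed

lemma eigenvalues_diagonal:
  fixes D :: "real^'n^'n"
  assumes "is_diagonal D"
  shows "eigenvalues D = range (\<lambda>i. D $ i $ i)"
proof
  show "eigenvalues D \<subseteq> range (\<lambda>i. D $ i $ i)"
  proof
    fix l assume "l \<in> eigenvalues D"
    then obtain v where v: "v \<noteq> 0" "D *v v = l *\<^sub>R v"
      by (auto simp: eigenvalues_def)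
    then obtain k where k: "v $ k \<noteq> 0"
      by (auto simp: vec_eq_iff)
    have "D $ k $ k * v $ k = l * v $ k"
      using arg_cong[OF v(2), of "\<lambda>w. w $ k"] by (simp add: is_diagonal_mulv_nth[OF assms])
    with k show "l \<in> range (\<lambda>i. D $ i $ i)"
      by auto
  qed
next
  have "D *v axis i 1 = D $ i $ i *\<^sub>R axis i 1" for i
    by (simp add: vec_eq_iff is_diagonal_mulv_nth[OF assms] axis_def)
  then have "D $ i $ i \<in> eigenvalues D" for i
    unfolding eigenvalues_def by (intro CollectI exI[of _ "axis i 1"]) (simp add: axis_eq_0_iff)
  then show "range (\<lambda>i. D $ i $ i) \<subseteq> eigenvalues D"
    by auto
qed

lemma pos_def_eigenvalue_pos:
  assumes "pos_def P" "l \<in> eigenvalues P"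
  shows "l > 0"
proof -
  obtain v where v: "v \<noteq> 0" "P *v v = l *\<^sub>R v"
    using assms(2) by (auto simp: eigenvalues_def)
  have "0 < v \<bullet> (P *v v)"
    using assms(1) v(1) by (auto simp: pos_def_def)
  also have "\<dots> = l * (v \<bullet> v)"
    using v(2) by simp
  finally show ?thesis
    using inner_ge_zero[of v] by (auto simp: zero_less_mult_iff)
qed

lemma lambda_min_pos_le_diagonal:
  fixes P V D :: "real^'n^'n"
  assumes "pos_def P" "orthogonal_matrix V" "is_diagonal D" "P = V ** D ** transpose V"
  shows "0 < lambda_min P" "lambda_min P \<le> D $ i $ i"
proof -
  have eig: "eigenvalues P = range (\<lambda>i. D $ i $ i)"
    using assms(2-4) by (simp add: eigenvalues_orthogonal_conj eigenvalues_diagonal)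
  then show "lambda_min P \<le> D $ i $ i"
    unfolding lambda_min_def by simp
  have "lambda_min P \<in> eigenvalues P"
    unfolding lambda_min_def eig by (intro Min_in) auto
  then show "0 < lambda_min P"
    by (rule pos_def_eigenvalue_pos[OF assms(1)])
qed

lemma ell_le_minus_inner_self:
  fixes V D :: "real^'n^'n"
  assumes "orthogonal_matrix V" "\<And>i. D $ i $ i * \<beta> > 1"
  shows "ell V D c \<beta> \<le> - \<beta> - c \<bullet> c"
proof -
  define cb where "cb = transpose V *v c"
  define S where "S = {i. cb $ i \<noteq> 0}"
  have "c \<bullet> c = cb \<bullet> cb"
    unfolding cb_def by (rule orthogonal_matrix_inner[symmetric]) (simp add: assms(1))
  also have "\<dots> = (\<Sum>i\<in>UNIV. (cb $ i)\<^sup>2)"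
    by (simp add: inner_vec_def power2_eq_square)
  also have "\<dots> = (\<Sum>i\<in>S. (cb $ i)\<^sup>2)"
    by (intro sum.mono_neutral_right) (auto simp: S_def)
  also have "\<dots> \<le> (\<Sum>i\<in>S. (cb $ i)\<^sup>2 * (D $ i $ i * \<beta> / (D $ i $ i * \<beta> - 1)))"
  proof (intro sum_mono)
    fix i
    have "1 \<le> D $ i $ i * \<beta> / (D $ i $ i * \<beta> - 1)"
      using assms(2)[of i] by (simp add: field_simps)
    from mult_left_mono[OF this zero_le_power2[of "cb $ i"]]
    show "(cb $ i)\<^sup>2 \<le> (cb $ i)\<^sup>2 * (D $ i $ i * \<beta> / (D $ i $ i * \<beta> - 1))"
      by (simp only: mult_1_right)
  qed
  finally show ?thesis
    unfolding ell_def Let_def cb_def[symmetric] S_def[symmetric] by linarith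
qed

theorem proposition2:
  fixes P V D :: "real^'n^'n" and c :: "real^'n" and \<beta> :: real
  assumes "pos_def P"
    and "orthogonal_matrix V" and "is_diagonal D" and "P = V ** D ** transpose V"
    and "\<beta> > max (inverse (lambda_min P)) (1 - c \<bullet> c)"
  shows "ell V D c \<beta> < -1"
proof -
  note lambda_min = lambda_min_pos_le_diagonal[OF assms(1-4)]
  have "0 < \<beta>"
    using assms(5) lambda_min(1) by (meson less_trans max.strict_boundedE positive_imp_inverse_positive)
  have "D $ i $ i * \<beta> > 1" for i
  proof -
    have "1 < lambda_min P * \<beta>"
      using assms(5) lambda_min(1) by (simp add: field_simps)
    also have "\<dots> \<le> D $ i $ i * \<beta>"
      using \<open>0 < \<beta>\<close> lambda_min(2) by (simp add: mult_right_mono)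
    finally show ?thesis .
  qed
  then have "ell V D c \<beta> \<le> - \<beta> - c \<bullet> c"
    using assms(2) by (rule ell_le_minus_inner_self[rotated])
  then show ?thesis
    using assms(5) by linarith
qed

end
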